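(* Let $\psi$ be a reduced function. Then $w_\psi$ is periodic if and only if $\psi(n)=n-1$ for every sufficiently large integer $n$.
   Context: $\mathcal{A}$ is an alphabet disjoint from $\mathbb{N}^*=\{1,2,\dots\}$. A function is a map $\psi:\mathbb{N}^*\to\mathbb{N}^*\sqcup\mathcal{A}$ such that for every $n\ge1$ either $\psi(n)\in\mathcal{A}$ or $1\le\psi(n)\le n-1$. Associated words: $\pi_1=\varepsilon$ and, for $i\ge1$: if $\psi(i)\in\mathcal{A}$, $\pi_{i+1}=\pi_i\psi(i)\pi_i$; if $\psi(i)\in\mathbb{N}^*$, writing $\pi_i=\pi_{\psi(i)}b_i$ (where $\pi_{\psi(i)}$ is a prefix of $\pi_i$), $\pi_{i+1}=\pi_ib_i$. Each $\pi_i$ is a proper prefix of $\pi_{i+1}$, and $w_\psi$ is the infinite word having all $\pi_i$ as prefixes. Let $(t_k)_{k\ge0}$ be the (finite or infinite) family, in increasing order, of all $n\ge1$ with $\psi(n)\in\mathcal{A}$ or $1\le\psi(n)\le n-2$. $\psi$ is reduced if for every $k\ge1$ such that $t_k$ exists: $\psi(t_k)\ne\psi(t_{k-1})$, and either $\psi(t_k)\in\mathcal{A}$ or $\psi(t_k)<t_{k-1}$. *)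

theory Defs
  imports Main
begin

(* A "function" psi : N* -> N* + A is modelled as psi :: nat => 'a + nat,
   with Inl a for a letter of the alphabet 'a and Inr k for a positive integer k.
   The value psi 0 is irrelevant. *)

definition is_function :: "(nat \<Rightarrow> 'a + nat) \<Rightarrow> bool" where
  "is_function psi \<longleftrightarrow>
     (\<forall>n\<ge>1. case psi n of Inl _ \<Rightarrow> True | Inr k \<Rightarrow> 1 \<le> k \<and> k \<le> n - 1)"

(* pis psi m = [pi_1, ..., pi_(m+1)] *)
primrec pis :: "(nat \<Rightarrow> 'a + nat) \<Rightarrow> nat \<Rightarrow> 'a list list" where
  "pis psi 0 = [[]]"
| "pis psi (Suc m) =
     (let L = pis psi m; p = last L
      in L @ [case psi (Suc m) of
                Inl a \<Rightarrow> p @ [a] @ p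
              | Inr k \<Rightarrow> p @ drop (length (L ! (k - 1))) p])"

definition assoc_word :: "(nat \<Rightarrow> 'a + nat) \<Rightarrow> nat \<Rightarrow> 'a list" where
  "assoc_word psi i = last (pis psi (i - 1))"

definition w_psi :: "(nat \<Rightarrow> 'a + nat) \<Rightarrow> nat \<Rightarrow> 'a" where
  "w_psi psi = (THE w. \<forall>i\<ge>1. \<forall>j<length (assoc_word psi i). w j = assoc_word psi i ! j)"

(* the set of all t_k *)
definition tset :: "(nat \<Rightarrow> 'a + nat) \<Rightarrow> nat set" where
  "tset psi = {n. n \<ge> 1 \<and> (case psi n of Inl _ \<Rightarrow> True | Inr k \<Rightarrow> 1 \<le> k \<and> k + 2 \<le> n)}"

(* reduced: for consecutive elements t_{k-1} = m < n = t_k of the family *)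
definition reduced :: "(nat \<Rightarrow> 'a + nat) \<Rightarrow> bool" where
  "reduced psi \<longleftrightarrow>
     (\<forall>m n. m \<in> tset psi \<and> n \<in> tset psi \<and> m < n \<and> (\<forall>l. m < l \<and> l < n \<longrightarrow> l \<notin> tset psi)
        \<longrightarrow> psi n \<noteq> psi m \<and>
            (case psi n of Inl _ \<Rightarrow> True | Inr k \<Rightarrow> k < m))"

definition periodic_word :: "(nat \<Rightarrow> 'a) \<Rightarrow> bool" where
  "periodic_word w \<longleftrightarrow> (\<exists>p>0. \<forall>n. w (n + p) = w n)"

end

theory Submission
  imports Defs
begin

(* Each pi_i is a palindrome, so pi_(i+1) has the period gap i = |pi_(i+1)| - |pi_i|. The gaps
   never decrease, are unchanged at every n with psi n = n - 1 and grow strictly at every t_k.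
   If psi n = n - 1 for all large n, the final constant gap is therefore a period of all of w_psi.
   Conversely, for reduced psi the pi_i are the only palindromic prefixes of w_psi: a palindromic
   prefix strictly between pi_n and pi_(n+1) is reflected in |pi_n| to some pi_j, and comparing the
   resulting periods of pi_n with the previous t_k contradicts reducedness. Hence gap i is the
   least period of pi_(i+1), a period of w_psi bounds every gap, and there are only finitely
   many t_k. *)

section \<open>Palindromic prefixes and periods\<close>

definition pal_prefix :: "(nat \<Rightarrow> 'b) \<Rightarrow> nat \<Rightarrow> bool" where
  "pal_prefix w l \<longleftrightarrow> (\<forall>x<l. w x = w (l - 1 - x))"

definition prefix_period :: "(nat \<Rightarrow> 'b) \<Rightarrow> nat \<Rightarrow> nat \<Rightarrow> bool" where
  "prefix_period w l q \<longleftrightarrow> (\<forall>x. x + q < l \<longrightarrow> w x = w (x + q))"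

lemma pal_prefixD: "pal_prefix w l \<Longrightarrow> x < l \<Longrightarrow> w x = w (l - 1 - x)"
  unfolding pal_prefix_def by blast

lemma prefix_periodD: "prefix_period w l q \<Longrightarrow> x + q < l \<Longrightarrow> w x = w (x + q)"
  unfolding prefix_period_def by blast

lemma prefix_period_antimono: "prefix_period w b q \<Longrightarrow> a \<le> b \<Longrightarrow> prefix_period w a q"
  unfolding prefix_period_def by auto

lemma prefix_period_multiple: "prefix_period w l q \<Longrightarrow> prefix_period w l (c * q)"
proof (induction c)
  case 0
  then show ?case by (simp add: prefix_period_def)
next
  case (Suc c)
  show ?case unfolding prefix_period_def
  proof (intro allI impI)
    fix x assume x: "x + Suc c * q < l"
    have "w x = w (x + q)" using prefix_periodD[OF Suc.prems, of x] x by simp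
    also have "\<dots> = w (x + q + c * q)" using prefix_periodD[OF Suc.IH[OF Suc.prems], of "x + q"] x
      by (simp add: add.assoc)
    finally show "w x = w (x + Suc c * q)" by (simp add: add.assoc)
  qed
qed

lemma prefix_period_of_pal_prefixes:
  assumes "pal_prefix w a" "pal_prefix w b" "a \<le> b"
  shows "prefix_period w b (b - a)"
  unfolding prefix_period_def
proof (intro allI impI)
  fix x assume x: "x + (b - a) < b"
  have "w (x + (b - a)) = w (b - 1 - (x + (b - a)))" using pal_prefixD[OF assms(2) x] .
  also have "b - 1 - (x + (b - a)) = a - 1 - x" using x assms(3) by simp
  also have "w (a - 1 - x) = w x" using pal_prefixD[OF assms(1), of x] x assms(3) by simp
  finally show "w x = w (x + (b - a))" by simp
qed

lemma pal_prefix_drop_period: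
  assumes "pal_prefix w b" "prefix_period w b q" "q \<le> b"
  shows "pal_prefix w (b - q)"
  unfolding pal_prefix_def
proof (intro allI impI)
  fix x assume x: "x < b - q"
  have "w x = w (x + q)" using prefix_periodD[OF assms(2), of x] x by simp
  also have "\<dots> = w (b - 1 - (x + q))" using pal_prefixD[OF assms(1), of "x + q"] x by simp
  also have "b - 1 - (x + q) = b - q - 1 - x" by simp
  finally show "w x = w (b - q - 1 - x)" .
qed

lemma pal_prefix_reflect:
  assumes "pal_prefix w a" "pal_prefix w b" "a \<le> b" "b \<le> 2 * a"
  shows "pal_prefix w (2 * a - b)"
proof -
  have "prefix_period w a (b - a)"
    using prefix_period_antimono[OF prefix_period_of_pal_prefixes[OF assms(1-3)] assms(3)] .
  then have "pal_prefix w (a - (b - a))" using pal_prefix_drop_period[OF assms(1)] assms(4) by simp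
  moreover have "a - (b - a) = 2 * a - b" using assms(3,4) by simp
  ultimately show ?thesis by simp
qed

lemma pal_prefix_extend:
  assumes "pal_prefix w a" "prefix_period w (a + q) q" "q \<le> a + 1"
  shows "pal_prefix w (a + q)"
  unfolding pal_prefix_def
proof (intro allI impI)
  fix x assume x: "x < a + q"
  consider "q \<le> x" | "x < q" "q \<le> a + q - 1 - x" | "a + q - 1 - x = x"
    using assms(3) by linarith
  then show "w x = w (a + q - 1 - x)"
  proof cases
    case 1
    have "w (x - q) = w x" using prefix_periodD[OF assms(2), of "x - q"] 1 x by simp
    moreover have "w (x - q) = w (a - 1 - (x - q))" using pal_prefixD[OF assms(1), of "x - q"] 1 x by simp
    moreover have "a - 1 - (x - q) = a + q - 1 - x" using 1 x by simp
    ultimately show ?thesis by simp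
  next
    case 2
    have "a - 1 - x + q = a + q - 1 - x" using 2 by simp
    then have "w (a - 1 - x) = w (a + q - 1 - x)"
      using prefix_periodD[OF assms(2), of "a - 1 - x"] 2 x by simp
    moreover have "w x = w (a - 1 - x)" using pal_prefixD[OF assms(1), of x] 2 x by simp
    ultimately show ?thesis by simp
  next
    case 3
    then show ?thesis by simp
  qed
qed

lemma prefix_period_diff:
  assumes "prefix_period w n p" "prefix_period w n q" "p < q" "p + q \<le> n"
  shows "prefix_period w n (q - p)"
  unfolding prefix_period_def
proof (intro allI impI)
  fix x assume x: "x + (q - p) < n"
  show "w x = w (x + (q - p))"
  proof (cases "x + q < n")
    case True
    have "w (x + (q - p)) = w (x + (q - p) + p)" using prefix_periodD[OF assms(1), of "x + (q - p)"] True assms(3) by simp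
    moreover have "w x = w (x + q)" using prefix_periodD[OF assms(2) True] .
    ultimately show ?thesis using assms(3) by simp
  next
    case False
    then have xp: "p \<le> x" using assms(4) by simp
    have "w (x - p) = w (x - p + p)" using prefix_periodD[OF assms(1), of "x - p"] x xp assms(3) by simp
    moreover have "w (x - p) = w (x - p + q)" using prefix_periodD[OF assms(2), of "x - p"] x xp assms(3) by simp
    ultimately show ?thesis using xp assms(3) by simp
  qed
qed

text \<open>A weak form of the Fine--Wilf theorem (with \<open>p + q\<close> instead of \<open>p + q - gcd p q\<close>).\<close>

lemma prefix_period_gcd:
  "prefix_period w n p \<Longrightarrow> prefix_period w n q \<Longrightarrow> p + q \<le> n \<Longrightarrow> prefix_period w n (gcd p q)"
proof (induction "p + q" arbitrary: p q rule: less_induct)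
  case less
  consider "p = 0 \<or> q = 0 \<or> p = q" | "0 < p" "p < q" | "0 < q" "q < p"
    by linarith
  then show ?case
  proof cases
    case 1
    then show ?thesis using less.prems by auto
  next
    case 2
    have "prefix_period w n (gcd p (q - p))"
      using less.hyps[OF _ less.prems(1) prefix_period_diff[OF less.prems(1,2) 2(2) less.prems(3)]]
        2 less.prems(3) by simp
    then show ?thesis using gcd_diff1_nat[of p q] 2 by (simp add: gcd.commute)
  next
    case 3
    have "prefix_period w n (gcd (p - q) q)"
      using less.hyps[OF _ prefix_period_diff[OF less.prems(2,1) 3(2)] less.prems(2)]
        3 less.prems(3) by simp
    then show ?thesis using gcd_diff1_nat[of q p] 3 by simp
  qed
qed

lemma prefix_period_extend:
  assumes "prefix_period w b D" "prefix_period w a h" "D \<le> a" "a \<le> b" "h dvd D" "0 < D"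
  shows "prefix_period w b h"
  unfolding prefix_period_def
proof (intro allI)
  have hD: "prefix_period w a (D - h)"
  proof -
    obtain c where "D = c * h" using assms(5) by (metis dvd_def mult.commute)
    then have "D - h = (c - 1) * h" by (simp add: diff_mult_distrib)
    then show ?thesis using prefix_period_multiple[OF assms(2)] by simp
  qed
  have "h \<le> D" using assms(5,6) by (simp add: dvd_imp_le)
  fix y
  show "y + h < b \<longrightarrow> w y = w (y + h)"
  proof (induction y rule: less_induct)
    case (less y)
    show ?case
    proof (intro impI)
      assume yb: "y + h < b"
      consider "y + h < a" | "D \<le> y" | "y < D" "D \<le> y + h"
        using assms(3) by linarith
      then show "w y = w (y + h)"
      proof cases
        case 1
        then show ?thesis using prefix_periodD[OF assms(2), of y] by simp
      next
        case 2
        have "w (y - D) = w (y - D + h)" using less.IH[of "y - D"] assms(6) 2 yb by simp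
        moreover have "w (y - D) = w y" using prefix_periodD[OF assms(1), of "y - D"] 2 yb by simp
        moreover have "w (y - D + h) = w (y + h)"
          using prefix_periodD[OF assms(1), of "y - D + h"] 2 yb by simp
        ultimately show ?thesis by simp
      next
        case 3
        have "w (y + h - D) = w (y + h)" using prefix_periodD[OF assms(1), of "y + h - D"] 3 yb by simp
        moreover have "w (y + h - D) = w y"
          using prefix_periodD[OF hD, of "y + h - D"] 3 \<open>h \<le> D\<close> assms(3) by simp
        ultimately show ?thesis by simp
      qed
    qed
  qed
qed

lemma prefix_period_of_pal_prefix_shift:
  assumes "c < b" "c + b \<le> n" "pal_prefix w n" "\<And>t. t < n - b \<Longrightarrow> w (b + t) = w (c + t)"
  shows "prefix_period w n (b - c)"
proof -
  have right: "w x = w (x + (b - c))" if "x + (b - c) < n" "c \<le> x" for x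
  proof -
    have "b + (x - c) = x + (b - c)" "c + (x - c) = x" using that assms(1) by simp_all
    then show ?thesis using assms(4)[of "x - c"] that by simp
  qed
  show ?thesis unfolding prefix_period_def
  proof (intro allI impI)
    fix x assume x: "x + (b - c) < n"
    show "w x = w (x + (b - c))"
    proof (cases "c \<le> x")
      case True
      then show ?thesis using right x by simp
    next
      case False
      define y where "y = n - 1 - (x + (b - c))"
      have "w y = w (y + (b - c))" using right[of y] False assms(1,2) x unfolding y_def by simp
      moreover have "w x = w (n - 1 - x)" using pal_prefixD[OF assms(3), of x] x by simp
      moreover have "w (x + (b - c)) = w y" using pal_prefixD[OF assms(3) x] unfolding y_def .
      moreover have "y + (b - c) = n - 1 - x" using x unfolding y_def by simp
      ultimately show ?thesis by simp
    qed
  qed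
qed

section \<open>The words pi_i\<close>

lemma length_pis: "length (pis psi m) = Suc m"
  by (induction m) (simp_all add: Let_def)

lemma nth_pis: "j \<le> m \<Longrightarrow> pis psi m ! j = last (pis psi j)"
proof (induction m)
  case 0
  then show ?case by simp
next
  case (Suc m)
  have pis_Suc: "pis psi (Suc m) = pis psi m @ [last (pis psi (Suc m))]"
    by (simp add: Let_def)
  show ?case
  proof (cases "j = Suc m")
    case True
    then show ?thesis by (subst pis_Suc) (simp add: nth_append length_pis)
  next
    case False
    then show ?thesis using Suc by (subst pis_Suc) (simp add: nth_append length_pis)
  qed
qed

lemma assoc_word_1 [simp]: "assoc_word psi (Suc 0) = []"
  by (simp add: assoc_word_def)

locale psi_function =
  fixes psi :: "nat \<Rightarrow> 'a + nat"
  assumes is_function: "is_function psi"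
begin

abbreviation \<pi> :: "nat \<Rightarrow> 'a list" where "\<pi> \<equiv> assoc_word psi"
abbreviation L :: "nat \<Rightarrow> nat" where "L i \<equiv> length (\<pi> i)"
abbreviation W :: "nat \<Rightarrow> 'a" where "W \<equiv> w_psi psi"

lemma psi_InrD:
  assumes "1 \<le> n" "psi n = Inr k"
  shows "1 \<le> k \<and> k < n"
proof -
  have "1 \<le> k \<and> k \<le> n - 1" using is_function assms unfolding is_function_def by (metis sum.simps(6))
  then show ?thesis by linarith
qed

lemma psi_1: obtains a where "psi 1 = Inl a"
  using psi_InrD[of 1] by (cases "psi 1") auto

lemma assoc_word_Suc:
  assumes "1 \<le> i"
  shows "\<pi> (Suc i) = (case psi i of Inl a \<Rightarrow> \<pi> i @ a # \<pi> i | Inr k \<Rightarrow> \<pi> i @ drop (L k) (\<pi> i))"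
proof -
  obtain i' where i': "i = Suc i'" using assms by (cases i) auto
  have "\<pi> k = pis psi i' ! (k - 1)" if "psi i = Inr k" for k
    using psi_InrD[OF assms that] nth_pis[of "k - 1" i' psi] i' by (auto simp: assoc_word_def)
  then show ?thesis by (cases "psi i") (simp_all add: assoc_word_def Let_def i')
qed

lemma assoc_word_Suc_Inl: "1 \<le> i \<Longrightarrow> psi i = Inl a \<Longrightarrow> \<pi> (Suc i) = \<pi> i @ a # \<pi> i"
  using assoc_word_Suc by simp

lemma assoc_word_Suc_Inr: "1 \<le> i \<Longrightarrow> psi i = Inr k \<Longrightarrow> \<pi> (Suc i) = \<pi> i @ drop (L k) (\<pi> i)"
  using assoc_word_Suc by simp

lemma L_Suc_Inl: "1 \<le> i \<Longrightarrow> psi i = Inl a \<Longrightarrow> L (Suc i) = 2 * L i + 1"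
  by (simp add: assoc_word_Suc_Inl)

lemma L_less_Suc: "1 \<le> k \<Longrightarrow> k \<le> i \<Longrightarrow> L k < L (Suc i)"
proof (induction i arbitrary: k)
  case 0
  then show ?case by simp
next
  case (Suc i)
  have "L (Suc i) < L (Suc (Suc i))"
  proof (cases "psi (Suc i)")
    case (Inl a)
    then show ?thesis using L_Suc_Inl[of "Suc i"] by simp
  next
    case (Inr k')
    then have "L k' < L (Suc i)" using psi_InrD[of "Suc i" k'] Suc.IH by simp
    then show ?thesis using assoc_word_Suc_Inr[of "Suc i", OF _ Inr] by simp
  qed
  moreover have "L k \<le> L (Suc i)" using Suc.IH[of k] Suc.prems by (cases "k = Suc i") simp_all
  ultimately show ?case by simp
qed

lemma L_less: "1 \<le> a \<Longrightarrow> a < b \<Longrightarrow> L a < L b"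
  using L_less_Suc[of a "b - 1"] by simp

lemma L_less_iff: "1 \<le> a \<Longrightarrow> 1 \<le> b \<Longrightarrow> L a < L b \<longleftrightarrow> a < b"
  using L_less[of a b] L_less[of b a] by (cases a b rule: linorder_cases) auto

lemma L_le_iff: "1 \<le> a \<Longrightarrow> 1 \<le> b \<Longrightarrow> L a \<le> L b \<longleftrightarrow> a \<le> b"
  using L_less_iff[of b a] by linarith

lemma L_eq_iff: "1 \<le> a \<Longrightarrow> 1 \<le> b \<Longrightarrow> L a = L b \<longleftrightarrow> a = b"
  using L_le_iff[of a b] L_le_iff[of b a] by linarith

lemma L_Suc_Inr: "1 \<le> i \<Longrightarrow> psi i = Inr k \<Longrightarrow> L (Suc i) = 2 * L i - L k"
  using L_less[of k i] psi_InrD[of i k] by (simp add: assoc_word_Suc_Inr)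

lemma L_ge: "i \<le> Suc (L i)"
proof (induction i)
  case (Suc i)
  then show ?case using L_less[of i "Suc i"] by (cases "i = 0") auto
qed simp

lemma assoc_word_prefix:
  assumes "1 \<le> i" "i \<le> j"
  shows "\<exists>s. \<pi> j = \<pi> i @ s"
  using assms(2)
proof (induction rule: dec_induct)
  case (step j)
  then show ?case using assoc_word_Suc[of j] assms(1) by (cases "psi j") auto
qed simp

lemma nth_assoc_word_agree:
  assumes "1 \<le> i" "1 \<le> j" "x < L i" "x < L j"
  shows "\<pi> i ! x = \<pi> j ! x"
proof -
  have "\<pi> i ! x = \<pi> j ! x" if "1 \<le> i" "i \<le> j" "x < L i" for i j
    using assoc_word_prefix[OF that(1,2)] that(3) by (auto simp: nth_append)
  then show ?thesis using assms by (metis nat_le_linear)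
qed

lemma nth_w_psi: "1 \<le> i \<Longrightarrow> x < L i \<Longrightarrow> W x = \<pi> i ! x"
proof -
  define w where "w x = \<pi> (x + 2) ! x" for x
  have x_less: "x < L (x + 2)" for x using L_ge[of "x + 2"] L_less[of "x + 1" "x + 2"] by simp
  have w: "\<forall>i\<ge>1. \<forall>x<L i. w x = \<pi> i ! x"
    unfolding w_def by (metis x_less nth_assoc_word_agree le_add2 one_add_one add_leD2)
  have "W = w" unfolding w_psi_def
  proof (rule the_equality)
    fix w' assume "\<forall>i\<ge>1. \<forall>x<L i. w' x = \<pi> i ! x"
    then show "w' = w" using x_less unfolding w_def by auto
  qed (use w in blast)
  then show "1 \<le> i \<Longrightarrow> x < L i \<Longrightarrow> W x = \<pi> i ! x" using w by simp
qed

lemma rev_assoc_word: "1 \<le> i \<Longrightarrow> rev (\<pi> i) = \<pi> i"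
proof (induction i rule: less_induct)
  case (less i)
  show ?case
  proof (cases "i = 1")
    case False
    then obtain j where j: "i = Suc j" "1 \<le> j" using less.prems by (cases i) auto
    have IHj: "rev (\<pi> j) = \<pi> j" using less.IH j by simp
    show ?thesis
    proof (cases "psi j")
      case (Inl a)
      then show ?thesis using assoc_word_Suc_Inl[OF j(2)] IHj j(1) by simp
    next
      case (Inr k)
      then have k: "1 \<le> k" "k < j" using psi_InrD[OF j(2)] by auto
      have IHk: "rev (\<pi> k) = \<pi> k" using less.IH k j by simp
      obtain s where s: "\<pi> j = \<pi> k @ s" using assoc_word_prefix[of k j] k by auto
      have "\<pi> i = \<pi> k @ s @ s" using assoc_word_Suc_Inr[OF j(2) Inr] s j(1) by simp
      moreover have "\<pi> k @ s = rev s @ \<pi> k" using IHj IHk s by (metis rev_append)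
      then have "\<pi> k @ s @ s = rev s @ rev s @ \<pi> k" by (metis append.assoc)
      ultimately show ?thesis using IHk by simp
    qed
  qed simp
qed

lemma pal_prefix_L: "1 \<le> i \<Longrightarrow> pal_prefix W (L i)"
  unfolding pal_prefix_def
proof (intro allI impI)
  fix x assume i: "1 \<le> i" and x: "x < L i"
  have "W x = rev (\<pi> i) ! x" using nth_w_psi i x rev_assoc_word by simp
  also have "\<dots> = W (L i - 1 - x)" using nth_w_psi i x by (simp add: rev_nth)
  finally show "W x = W (L i - 1 - x)" .
qed

lemma w_psi_after_Inl:
  assumes "1 \<le> i" "psi i = Inl a"
  shows "W (L i) = a" and "t < L i \<Longrightarrow> W (L i + 1 + t) = W t"
proof -
  note word = assoc_word_Suc_Inl[OF assms]
  show "W (L i) = a" using nth_w_psi[of "Suc i" "L i"] word by simp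
  show "W (L i + 1 + t) = W t" if "t < L i"
    using nth_w_psi[of "Suc i" "L i + 1 + t"] nth_w_psi[OF assms(1) that] word that
    by (simp add: nth_append)
qed

lemma w_psi_reflected_shift:
  assumes "1 \<le> n" "pal_prefix W (2 * L n - L j)" "L j < L n" "t < L n - L j"
  shows "W (L j + t) = W (L n + t)"
proof -
  have "prefix_period W (2 * L n - L j) (L n - L j)"
    using prefix_period_of_pal_prefixes[OF pal_prefix_L[OF assms(1)] assms(2)] assms(3) by simp
  from prefix_periodD[OF this, of "L j + t"] show ?thesis using assms(3,4) by (simp add: add.commute)
qed

lemma w_psi_after_Inr:
  assumes "1 \<le> i" "psi i = Inr k" "t < L i - L k"
  shows "W (L i + t) = W (L k + t)"
  using nth_w_psi[of "Suc i" "L i + t"] nth_w_psi[OF assms(1), of "L k + t"]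
    assoc_word_Suc_Inr[OF assms(1,2)] assms(3) by (simp add: nth_append)

definition gap :: "nat \<Rightarrow> nat" where "gap i = L (Suc i) - L i"

lemma L_Suc_gap: "1 \<le> i \<Longrightarrow> L (Suc i) = L i + gap i"
  using L_less[of i "Suc i"] unfolding gap_def by simp

lemma gap_pos: "1 \<le> i \<Longrightarrow> 0 < gap i"
  using L_less[of i "Suc i"] unfolding gap_def by simp

lemma prefix_period_gap: "1 \<le> i \<Longrightarrow> prefix_period W (L (Suc i)) (gap i)"
  using prefix_period_of_pal_prefixes[OF pal_prefix_L pal_prefix_L, of i "Suc i"] L_Suc_gap[of i]
  by simp

lemma one_in_tset: "1 \<in> tset psi"
proof -
  obtain a where "psi 1 = Inl a" using psi_1 .
  then show ?thesis by (simp add: tset_def)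
qed

lemma psi_if_not_in_tset:
  assumes "2 \<le> n" "n \<notin> tset psi"
  shows "psi n = Inr (n - 1)"
proof (cases "psi n")
  case (Inl a)
  then show ?thesis using assms by (simp add: tset_def)
next
  case (Inr k)
  then have "1 \<le> k" "k < n" "\<not> k + 2 \<le> n" using psi_InrD[of n k] assms by (auto simp: tset_def)
  then show ?thesis using Inr by simp
qed

lemma tset_InrD: "n \<in> tset psi \<Longrightarrow> psi n = Inr k \<Longrightarrow> 1 \<le> k \<and> k + 2 \<le> n"
  unfolding tset_def by simp

lemma tset_pred:
  assumes "2 \<le> n"
  obtains m where "m \<in> tset psi" "1 \<le> m" "m < n" "\<And>l. m < l \<Longrightarrow> l < n \<Longrightarrow> l \<notin> tset psi"
proof -
  let ?S = "{m. m < n \<and> m \<in> tset psi}"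
  have fin: "finite ?S" by (rule finite_subset[of _ "{..<n}"]) auto
  have one: "1 \<in> ?S" using one_in_tset assms by simp
  define m where "m = Max ?S"
  have "m \<in> ?S" unfolding m_def using Max_in[OF fin] one by blast
  moreover have "1 \<le> m" unfolding m_def using Max_ge[OF fin one] .
  moreover have "l \<notin> tset psi" if "m < l" "l < n" for l
  proof
    assume "l \<in> tset psi"
    then have "l \<le> m" unfolding m_def using Max_ge[OF fin] that(2) by simp
    then show False using that(1) by simp
  qed
  ultimately show ?thesis using that by blast
qed

lemma gap_Suc_eq: "1 \<le> n \<Longrightarrow> psi (Suc n) = Inr n \<Longrightarrow> gap (Suc n) = gap n"
  using L_Suc_Inr[of "Suc n" n] L_Suc_gap[of n] unfolding gap_def by simp

lemma gap_Suc_less: "1 \<le> n \<Longrightarrow> Suc n \<in> tset psi \<Longrightarrow> gap n < gap (Suc n)"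
proof (cases "psi (Suc n)")
  case (Inl a)
  assume "1 \<le> n"
  then show ?thesis using L_Suc_Inl[of "Suc n" a] L_Suc_gap[of n] Inl unfolding gap_def by simp
next
  case (Inr k)
  assume "1 \<le> n" "Suc n \<in> tset psi"
  then have "1 \<le> k" "k < n" using tset_InrD Inr by fastforce+
  then show ?thesis using L_less[of k n] L_Suc_Inr[of "Suc n" k] L_Suc_gap[of n] Inr
    unfolding gap_def by simp
qed

lemma gap_mono:
  assumes "1 \<le> i" "i \<le> j"
  shows "gap i \<le> gap j"
  using assms(2)
proof (induction rule: dec_induct)
  case (step n)
  then have "1 \<le> n" using assms(1) by simp
  then have "gap n \<le> gap (Suc n)"
    using gap_Suc_less[of n] gap_Suc_eq[of n] psi_if_not_in_tset[of "Suc n"]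
    by (cases "Suc n \<in> tset psi") simp_all
  then show ?case using step.IH by simp
qed simp

lemma gap_const:
  assumes "1 \<le> m" "m \<le> l" "\<And>k. m < k \<Longrightarrow> k \<le> l \<Longrightarrow> psi k = Inr (k - 1)"
  shows "gap l = gap m"
  using assms(2,3)
proof (induction rule: dec_induct)
  case (step n)
  then show ?case using gap_Suc_eq[of n] assms(1) by simp
qed simp

lemma L_arith_progression:
  assumes "1 \<le> m" "m \<le> l" "\<And>k. m < k \<Longrightarrow> k < l \<Longrightarrow> psi k = Inr (k - 1)"
  shows "L l = L m + (l - m) * gap m"
  using assms(2,3)
proof (induction rule: dec_induct)
  case (step n)
  have "gap n = gap m" using gap_const[OF assms(1) step.hyps(1)] step.prems step.hyps by simp
  then show ?case using step L_Suc_gap[of n] assms(1) Suc_diff_le by simp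
qed simp

lemma w_psi_at_L_const:
  assumes "1 \<le> m" "m \<le> l" "\<And>k. m < k \<Longrightarrow> k \<le> l \<Longrightarrow> psi k = Inr (k - 1)"
  shows "W (L l) = W (L m)"
  using assms(2,3)
proof (induction rule: dec_induct)
  case (step n)
  have "1 \<le> n" using assms(1) step.hyps by simp
  then have "W (L (Suc n) + 0) = W (L n + 0)"
    using w_psi_after_Inr[of "Suc n" n 0] step.prems[of "Suc n"] step.hyps L_less[of n "Suc n"]
    by simp
  then show ?case using step by simp
qed simp

lemma periodic_if_eventually_pred:
  assumes "\<forall>n\<ge>N. psi n = Inr (n - 1)"
  shows "periodic_word W"
proof -
  define m where "m = Suc N"
  have m: "1 \<le> m" "\<And>k. m < k \<Longrightarrow> psi k = Inr (k - 1)" using assms unfolding m_def by auto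
  have "W (x + gap m) = W x" for x
  proof -
    define l where "l = x + gap m + m + 1"
    have l: "1 \<le> l" "m \<le> l" unfolding l_def by simp_all
    have "gap l = gap m" using gap_const[OF m(1) l(2)] m(2) by blast
    moreover have "x + gap l < L (Suc l)" using L_ge[of "Suc l"] \<open>gap l = gap m\<close> unfolding l_def by simp
    ultimately show ?thesis using prefix_periodD[OF prefix_period_gap[OF l(1)]] by metis
  qed
  then show ?thesis using gap_pos[OF m(1)] unfolding periodic_word_def by blast
qed

end

section \<open>Reduced functions\<close>

locale reduced_function = psi_function +
  assumes reduced: "reduced psi"
begin

lemma reduced_consecutive:
  assumes "m \<in> tset psi" "n \<in> tset psi" "m < n" "\<And>l. m < l \<Longrightarrow> l < n \<Longrightarrow> l \<notin> tset psi"
  shows "psi n \<noteq> psi m" and "psi n = Inr k \<Longrightarrow> k < m"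
proof -
  have "psi n \<noteq> psi m \<and> (case psi n of Inl _ \<Rightarrow> True | Inr k \<Rightarrow> k < m)"
    using reduced assms unfolding reduced_def by blast
  then show "psi n \<noteq> psi m" and "psi n = Inr k \<Longrightarrow> k < m" by auto
qed

definition pal_prefixes_are_pis :: "nat \<Rightarrow> bool" where
  "pal_prefixes_are_pis N \<longleftrightarrow> (\<forall>l \<le> L N. pal_prefix W l \<longrightarrow> (\<exists>i. 1 \<le> i \<and> i \<le> N \<and> l = L i))"

lemma pal_prefix_is_L:
  assumes "pal_prefixes_are_pis N" "pal_prefix W l" "l \<le> L N"
  obtains i where "1 \<le> i" "i \<le> N" "l = L i"
  using assms unfolding pal_prefixes_are_pis_def by blast

lemma no_pal_prefix_inside_gap:
  assumes "pal_prefixes_are_pis N" "1 \<le> i" "Suc i \<le> N" "L i < l" "l < L (Suc i)"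
  shows "\<not> pal_prefix W l"
proof
  assume "pal_prefix W l"
  moreover have "l \<le> L N" using L_le_iff[of "Suc i" N] assms by simp
  ultimately obtain j where j: "1 \<le> j" "l = L j" using pal_prefix_is_L[OF assms(1)] by metis
  then have "i < j" "j < Suc i" using L_less_iff[of i j] L_less_iff[of j "Suc i"] assms by simp_all
  then show False by simp
qed

lemma gap_le_prefix_period:
  assumes "pal_prefixes_are_pis N" "1 \<le> i" "Suc i \<le> N" "prefix_period W (L (Suc i)) q" "0 < q"
  shows "gap i \<le> q"
proof (rule ccontr)
  assume "\<not> gap i \<le> q"
  then have "L i < L (Suc i) - q" "q \<le> L (Suc i)" using L_Suc_gap[OF assms(2)] by simp_all
  moreover have "pal_prefix W (L (Suc i) - q)"
    using pal_prefix_drop_period[OF pal_prefix_L assms(4)] \<open>q \<le> L (Suc i)\<close> by simp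
  ultimately show False using no_pal_prefix_inside_gap[OF assms(1-3)] assms(5) by simp
qed

(* Otherwise the weak Fine-Wilf theorem combines the periods gap (m - 1) and gap m of pi_m into a
   period of pi_(m+1) shorter than its least period gap m. *)
lemma L_pred_less_gap:
  assumes "pal_prefixes_are_pis N" "m \<in> tset psi" "2 \<le> m" "Suc m \<le> N"
  shows "L (m - 1) < gap m"
proof (rule ccontr)
  assume "\<not> L (m - 1) < gap m"
  define D where "D = gap m"
  define d where "d = gap (m - 1)"
  have m1: "1 \<le> m - 1" "Suc (m - 1) = m" using assms(3) by simp_all
  have "d < D" "0 < d" using gap_Suc_less[of "m - 1"] gap_pos[OF m1(1)] assms(2) m1
    unfolding D_def d_def by simp_all
  have Lm: "L m = L (m - 1) + d" using L_Suc_gap[OF m1(1)] m1(2) unfolding d_def by simp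
  have LSm: "L (Suc m) = L m + D" using L_Suc_gap[of m] assms(3) unfolding D_def by simp
  have per_D: "prefix_period W (L (Suc m)) D" using prefix_period_gap[of m] assms(3) unfolding D_def by simp
  have per_d: "prefix_period W (L m) d" using prefix_period_gap[OF m1(1)] m1(2) unfolding d_def by simp
  have "prefix_period W (L m) (gcd D d)"
    using prefix_period_gcd[OF prefix_period_antimono[OF per_D] per_d] LSm Lm \<open>\<not> L (m - 1) < gap m\<close>
    unfolding D_def by simp
  then have "prefix_period W (L (Suc m)) (gcd D d)"
    using prefix_period_extend[OF per_D] Lm LSm \<open>0 < d\<close> \<open>d < D\<close> \<open>\<not> L (m - 1) < gap m\<close>
    unfolding D_def by simp
  then have "D \<le> gcd D d"
    using gap_le_prefix_period[OF assms(1) _ assms(4)] assms(3) \<open>0 < d\<close> unfolding D_def by simp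
  moreover have "gcd D d \<le> d" using \<open>0 < d\<close> by (simp add: gcd_le2_nat)
  ultimately show False using \<open>d < D\<close> by simp
qed

lemma pal_prefix_reflect_L:
  assumes "pal_prefixes_are_pis n" "1 \<le> n" "pal_prefix W l" "L n < l" "l \<le> 2 * L n"
  obtains j where "1 \<le> j" "j < n" "l = 2 * L n - L j"
proof -
  have "pal_prefix W (2 * L n - l)" using pal_prefix_reflect[OF pal_prefix_L[OF assms(2)] assms(3)] assms(4,5)
    by simp
  moreover have "2 * L n - l \<le> L n" using assms(4) by simp
  ultimately obtain j where j: "1 \<le> j" "j \<le> n" "2 * L n - l = L j"
    using pal_prefix_is_L[OF assms(1)] by blast
  then have "L j < L n" using assms(4,5) by simp
  then have "j < n" using L_less_iff[of j n] j(1) assms(2) by simp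
  then show ?thesis using that j assms(5) by simp
qed

lemma pal_prefix_split_Inl:
  assumes pis: "pal_prefixes_are_pis n" and n: "1 \<le> n" and psi_n: "psi n = Inl a"
    and l: "pal_prefix W l" "L n < l" "l < L (Suc n)"
  obtains i j where "1 \<le> i" "i < n" "1 \<le> j" "j < n" "L i + L j + 1 = L n"
    "W (L i) = a" "W (L j) = a"
proof -
  have LS: "L (Suc n) = 2 * L n + 1" using L_Suc_Inl[OF n psi_n] .
  obtain j where j: "1 \<le> j" "j < n" "l = 2 * L n - L j"
    using pal_prefix_reflect_L[OF pis n l(1,2)] l(3) LS by auto
  have Ljn: "L j < L n" using L_less[OF j(1,2)] .
  have shift: "W (L j + t) = W (L n + t)" if "t < L n - L j" for t
    using w_psi_reflected_shift[OF n _ Ljn that] l(1) j(3) by simp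
  have Wj: "W (L j) = a" using shift[of 0] Ljn w_psi_after_Inl(1)[OF n psi_n] by simp
  have "prefix_period W (L n) (L j + 1)"
    unfolding prefix_period_def
  proof (intro allI impI)
    fix x assume x: "x + (L j + 1) < L n"
    have "W (x + (L j + 1)) = W (L n + (x + 1))" using shift[of "x + 1"] x by (simp add: ac_simps)
    also have "\<dots> = W x" using w_psi_after_Inl(2)[OF n psi_n, of x] x by (simp add: ac_simps)
    finally show "W x = W (x + (L j + 1))" by simp
  qed
  then have "pal_prefix W (L n - (L j + 1))"
    using pal_prefix_drop_period[OF pal_prefix_L[OF n]] Ljn by simp
  then obtain i where i: "1 \<le> i" "i \<le> n" "L n - (L j + 1) = L i"
    using pal_prefix_is_L[OF pis] by (metis diff_le_self)
  have sum: "L i + L j + 1 = L n" using i(3) Ljn by simp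
  then have "i < n" using L_less_iff[OF i(1) n] by simp
  have "W (L i) = W (L n - 1 - L i)" using pal_prefixD[OF pal_prefix_L[OF n], of "L i"] sum by simp
  also have "L n - 1 - L i = L j" using sum by simp
  finally show ?thesis using that i(1) \<open>i < n\<close> j(1,2) sum Wj by simp
qed

context
  fixes n m :: nat
  assumes pis: "pal_prefixes_are_pis n"
    and n_in_tset: "n \<in> tset psi"
    and m_in_tset: "m \<in> tset psi" and m_pos: "1 \<le> m" and m_less: "m < n"
    and none_between: "\<And>l. m < l \<Longrightarrow> l < n \<Longrightarrow> l \<notin> tset psi"
begin

lemma psi_between: "m < l \<Longrightarrow> l < n \<Longrightarrow> psi l = Inr (l - 1)"
  using psi_if_not_in_tset[of l] none_between m_pos by simp

lemma L_between: "m \<le> l \<Longrightarrow> l \<le> n \<Longrightarrow> L l = L m + (l - m) * gap m"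
  by (rule L_arith_progression[OF m_pos]) (simp_all add: psi_between)

lemma w_psi_L_between: "m \<le> l \<Longrightarrow> l < n \<Longrightarrow> W (L l) = W (L m)"
  by (rule w_psi_at_L_const[OF m_pos]) (simp_all add: psi_between)

lemma gap_pred_n_eq: "gap (n - 1) = gap m"
  using gap_const[OF m_pos, of "n - 1"] psi_between m_less by simp

lemma L_n_eq: "L n = L (n - 1) + gap m"
  using L_Suc_gap[of "n - 1"] gap_pred_n_eq m_pos m_less by simp

lemma prefix_period_L_n: "prefix_period W (L n) (gap m)"
  using prefix_period_gap[of "n - 1"] gap_pred_n_eq m_pos m_less by simp

lemma gap_le_prefix_period_L_n: "0 < q \<Longrightarrow> prefix_period W (L n) q \<Longrightarrow> gap m \<le> q"
  using gap_le_prefix_period[OF pis, of "n - 1" q] gap_pred_n_eq m_pos m_less by simp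

lemma L_less_gap:
  assumes "1 \<le> k" "k < m"
  shows "L k < gap m"
proof -
  have "L k \<le> L (m - 1)" using L_le_iff[of k "m - 1"] assms by simp
  moreover have "L (m - 1) < gap m" using L_pred_less_gap[OF pis m_in_tset] assms m_less by simp
  ultimately show ?thesis by simp
qed

lemma L_less_double_gap:
  assumes "2 \<le> m"
  shows "L m < 2 * gap m"
proof -
  have m1: "1 \<le> m - 1" "Suc (m - 1) = m" using assms by simp_all
  have "L m = L (m - 1) + gap (m - 1)" using L_Suc_gap[OF m1(1)] m1(2) by simp
  moreover have "gap (m - 1) < gap m" using gap_Suc_less[OF m1(1)] m1(2) m_in_tset by simp
  moreover have "L (m - 1) < gap m" using L_less_gap[OF m1(1)] assms by simp
  ultimately show ?thesis by simp
qed

lemma L_eq_L_plus_gap: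
  assumes k: "1 \<le> k" "k < m" and j: "k < j" "j < n"
    and per: "prefix_period W (L n) (L j - L k)"
  shows "L m = L k + gap m"
proof -
  define D where "D = gap m"
  have "L k < L j" using L_less k(1) j(1) by simp
  have "D \<le> L j - L k" using gap_le_prefix_period_L_n per \<open>L k < L j\<close> unfolding D_def by simp
  then have "m \<le> j" using L_less_gap[of j] k(1) j(1) unfolding D_def by fastforce
  have "L j \<le> L n - D" using L_le_iff[of j "n - 1"] L_n_eq k(1) j unfolding D_def by simp
  then have "prefix_period W (L n) (gcd D (L j - L k))"
    using prefix_period_gcd[OF prefix_period_L_n per] \<open>L k < L j\<close> unfolding D_def by simp
  then have "D \<le> gcd D (L j - L k)"
    using gap_le_prefix_period_L_n gap_pos[OF m_pos] unfolding D_def by simp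
  moreover have "gcd D (L j - L k) \<le> D" using gap_pos[OF m_pos] unfolding D_def by simp
  ultimately have "D dvd L j - L k" by (metis antisym gcd_dvd2)
  moreover have "L j - L k = (L m - L k) + (j - m) * D"
    using L_between[of j] \<open>m \<le> j\<close> j(2) L_less[OF k] unfolding D_def by simp
  ultimately have "D dvd L m - L k" by (simp add: dvd_add_left_iff)
  then obtain c where c: "L m - L k = D * c" ..
  have "0 < L m - L k" "L m - L k < 2 * D"
    using L_less[OF k] L_less_double_gap k unfolding D_def by simp_all
  have "L m - L k = D"
  proof -
    have "0 < c" "D * c < D * 2" using c \<open>0 < L m - L k\<close> \<open>L m - L k < 2 * D\<close> by simp_all
    then have "c = 1" by simp
    then show ?thesis using c by simp
  qed
  then show ?thesis using L_less[OF k] unfolding D_def by simp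
qed

lemma no_pal_prefix_Inr:
  assumes psi_n: "psi n = Inr k" and l: "L n < l" "l < L (Suc n)"
  shows "\<not> pal_prefix W l"
proof
  assume pal: "pal_prefix W l"
  have k: "1 \<le> k" "k < m"
    using tset_InrD[OF n_in_tset psi_n] reduced_consecutive(2)[OF m_in_tset n_in_tset m_less none_between psi_n]
    by simp_all
  have n: "1 \<le> n" using m_pos m_less by simp
  have LS: "L (Suc n) = 2 * L n - L k" using L_Suc_Inr[OF n psi_n] .
  have "l \<le> 2 * L n" using l(2) LS by simp
  then obtain j where j: "1 \<le> j" "j < n" "l = 2 * L n - L j"
    using pal_prefix_reflect_L[OF pis n pal l(1)] by blast
  have "L k < L j" "L j < L n" using l(2) LS j(3) L_less[OF j(1,2)] by simp_all
  then have "k < j" using L_less_iff k(1) j(1) by blast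
  have shift: "W (L j + t) = W (L k + t)" if "t < L n - L j" for t
  proof -
    have "W (L j + t) = W (L n + t)" using w_psi_reflected_shift[OF n _ \<open>L j < L n\<close> that] pal j(3) by simp
    also have "\<dots> = W (L k + t)" using w_psi_after_Inr[OF n psi_n] that \<open>L k < L j\<close> by simp
    finally show ?thesis .
  qed
  have "L j \<le> L (n - 1)" using L_le_iff[of j "n - 1"] j(1,2) by simp
  then have "L k + L j \<le> L n" using L_less_gap[OF k] L_n_eq by simp
  then have "prefix_period W (L n) (L j - L k)"
    using prefix_period_of_pal_prefix_shift[OF \<open>L k < L j\<close> _ pal_prefix_L[OF n] shift] by simp
  then have Lm: "L m = L k + gap m" using L_eq_L_plus_gap[OF k \<open>k < j\<close> j(2)] by simp
  show False
  proof (cases "psi m")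
    case (Inl b)
    then show False using L_Suc_Inl[OF m_pos Inl] L_Suc_gap[OF m_pos] Lm by simp
  next
    case (Inr k')
    then have k': "1 \<le> k'" "k' < m" using psi_InrD[OF m_pos] by simp_all
    then have "L k' = L k" using L_Suc_Inr[OF m_pos Inr] L_Suc_gap[OF m_pos] L_less[OF k'] Lm by simp
    then have "psi m = psi n" using L_eq_iff[OF k'(1) k(1)] Inr psi_n by simp
    then show False using reduced_consecutive(1)[OF m_in_tset n_in_tset m_less none_between] by simp
  qed
qed

lemma L_split_small_summand:
  assumes i: "1 \<le> i" "i < m" and j: "1 \<le> j" "j < n" and sum: "L i + L j + 1 = L n"
  shows "j = n - 1" and "L m + 1 = 2 * gap m"
proof -
  define D where "D = gap m"
  have n1: "1 \<le> n - 1" "Suc (n - 1) = n" using m_pos m_less by simp_all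
  have "L i < D" using L_less_gap[OF i] unfolding D_def .
  then have "L (n - 1) \<le> L j" using sum L_n_eq unfolding D_def by simp
  then show jn: "j = n - 1" using L_le_iff[OF n1(1) j(1)] j(2) by simp
  have m2: "2 \<le> m" "Suc (m - 1) = m" using i by simp_all
  have "L i = D - 1" using sum L_n_eq jn unfolding D_def by simp
  moreover have "L i \<le> L (m - 1)" using L_le_iff[of i "m - 1"] i by simp
  moreover have "L (m - 1) < D" using L_less_gap[of "m - 1"] m2 unfolding D_def by simp
  ultimately have Lm1: "L (m - 1) = D - 1" by simp
  have "L (m - 1) < L m" using L_less[of "m - 1" m] m2 by simp
  then have "D \<le> L m" using Lm1 by simp
  have LSm: "L (Suc m) = L m + D" using L_Suc_gap[OF m_pos] unfolding D_def .
  then have "L (Suc m) \<le> L n" using L_le_iff[of "Suc m" n] m_less by simp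
  then have le: "D - 1 + D \<le> L n" using LSm \<open>D \<le> L m\<close> by simp
  have pal: "pal_prefix W (D - 1)" using pal_prefix_L[of "m - 1"] Lm1 m2 by simp
  have "prefix_period W (D - 1 + D) D"
    using prefix_period_antimono[OF prefix_period_L_n le] by (simp add: D_def)
  then have "pal_prefix W (D - 1 + D)" using pal_prefix_extend[OF pal] by simp
  then obtain r where r: "1 \<le> r" "D - 1 + D = L r" using pal_prefix_is_L[OF pis _ le] by metis
  have "0 < D" using gap_pos[OF m_pos] unfolding D_def .
  then have "L (m - 1) < L r" "L r < L (Suc m)" using r(2) Lm1 LSm \<open>D \<le> L m\<close> by simp_all
  then have "m - 1 < r" "r < Suc m" using L_less_iff[of "m - 1" r] L_less_iff[of r "Suc m"] m2 r(1)
    by simp_all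
  then have "r = m" by simp
  then show "L m + 1 = 2 * gap m" using r(2) \<open>0 < D\<close> unfolding D_def by simp
qed

lemma gap_dvd_Suc_L_m:
  assumes i: "1 \<le> i" "i < n" and j: "1 \<le> j" "j < n" and sum: "L i + L j + 1 = L n"
    and W_i: "W (L i) = a" and W_j: "W (L j) = a"
  shows "gap m dvd L m + 1" and "W (L m) = a"
proof -
  have n1: "m \<le> n - 1" "n - 1 < n" using m_less by simp_all
  consider "i < m" | "j < m" | "m \<le> i" "m \<le> j" by linarith
  then have "gap m dvd L m + 1 \<and> W (L m) = a"
  proof cases
    case 1
    then have "j = n - 1" "L m + 1 = 2 * gap m" using L_split_small_summand[OF i(1) 1 j sum] by simp_all
    then show ?thesis using w_psi_L_between[OF n1] W_j by simp
  next
    case 2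
    then have "i = n - 1" "L m + 1 = 2 * gap m" using L_split_small_summand[OF j(1) 2 i] sum by simp_all
    then show ?thesis using w_psi_L_between[OF n1] W_i by simp
  next
    case 3
    have "L i = L m + (i - m) * gap m" "L j = L m + (j - m) * gap m" "L n = L m + (n - m) * gap m"
      using L_between[of i] L_between[of j] L_between[of n] 3 i(2) j(2) m_less by simp_all
    then have "(L m + 1) + ((i - m) + (j - m)) * gap m = (n - m) * gap m"
      using sum unfolding add_mult_distrib by linarith
    then have "gap m dvd (L m + 1) + ((i - m) + (j - m)) * gap m" by simp
    moreover have "gap m dvd ((i - m) + (j - m)) * gap m" by simp
    ultimately have "gap m dvd L m + 1" using dvd_add_left_iff by blast
    then show ?thesis using w_psi_L_between[of j] 3 j W_j by simp
  qed
  then show "gap m dvd L m + 1" and "W (L m) = a" by simp_all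
qed

lemma no_pal_prefix_Inl:
  assumes psi_n: "psi n = Inl a" and l: "L n < l" "l < L (Suc n)"
  shows "\<not> pal_prefix W l"
proof
  assume pal: "pal_prefix W l"
  have n: "1 \<le> n" using m_pos m_less by simp
  obtain i j where i: "1 \<le> i" "i < n" and j: "1 \<le> j" "j < n" and sum: "L i + L j + 1 = L n"
    and W_i: "W (L i) = a" and W_j: "W (L j) = a"
    by (rule pal_prefix_split_Inl[OF pis n psi_n pal l])
  note dvd = gap_dvd_Suc_L_m(1)[OF i j sum W_i W_j]
  note W_m = gap_dvd_Suc_L_m(2)[OF i j sum W_i W_j]
  note consecutive = reduced_consecutive[OF m_in_tset n_in_tset m_less none_between]
  show False
  proof (cases "psi m")
    case (Inl b)
    then have "psi m = psi n" using w_psi_after_Inl(1)[OF m_pos Inl] W_m psi_n by simp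
    then show False using consecutive(1) by simp
  next
    case (Inr k)
    then have k: "1 \<le> k" "k + 2 \<le> m" using tset_InrD[OF m_in_tset] by simp_all
    have "L m = L k + gap m" using L_Suc_Inr[OF m_pos Inr] L_Suc_gap[OF m_pos] L_less[of k m] k by simp
    then have "gap m dvd (L k + 1) + gap m" using dvd by (simp add: ac_simps)
    then have "gap m dvd L k + 1" using dvd_add_left_iff[of "gap m" "gap m" "L k + 1"] by simp
    then have "gap m \<le> L k + 1" by (rule dvd_imp_le) simp
    moreover have "L (m - 1) < gap m" using L_pred_less_gap[OF pis m_in_tset] k m_less by simp
    ultimately have "L (m - 1) \<le> L k" by simp
    moreover have "1 \<le> m - 1" using k by simp
    ultimately show False using L_le_iff[of "m - 1" k] k by simp
  qed
qed

end

lemma no_pal_prefix_after_L: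
  assumes pis: "pal_prefixes_are_pis n" and n: "1 \<le> n" and l: "L n < l" "l < L (Suc n)"
  shows "\<not> pal_prefix W l"
proof (cases "n \<in> tset psi")
  case False
  then have n2: "2 \<le> n" using n one_in_tset by (cases "n = 1") simp_all
  have LS: "L (Suc n) = 2 * L n - L (n - 1)"
    using L_Suc_Inr[OF n psi_if_not_in_tset[OF n2 False]] .
  show ?thesis
  proof
    assume pal: "pal_prefix W l"
    have "l \<le> 2 * L n" using l(2) LS by simp
    then obtain j where j: "1 \<le> j" "j < n" "l = 2 * L n - L j"
      using pal_prefix_reflect_L[OF pis n pal l(1)] by blast
    then have "L (n - 1) < L j" using l(2) LS by simp
    moreover have "1 \<le> n - 1" using n2 by simp
    ultimately show False using L_less_iff[of "n - 1" j] j by simp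
  qed
next
  case True
  have "n \<noteq> 1"
  proof
    assume "n = 1"
    moreover obtain a where "psi 1 = Inl a" using psi_1 .
    ultimately show False using L_Suc_Inl[of 1 a] l by simp
  qed
  then have "2 \<le> n" using n by simp
  then obtain m where m: "m \<in> tset psi" "1 \<le> m" "m < n" "\<And>l. m < l \<Longrightarrow> l < n \<Longrightarrow> l \<notin> tset psi"
    by (rule tset_pred) blast
  show ?thesis
  proof (cases "psi n")
    case (Inl a)
    show ?thesis by (rule no_pal_prefix_Inl[OF pis True m Inl l])
  next
    case (Inr k)
    show ?thesis by (rule no_pal_prefix_Inr[OF pis True m Inr l])
  qed
qed

lemma pal_prefixes_are_pis: "1 \<le> n \<Longrightarrow> pal_prefixes_are_pis n"
proof (induction n rule: dec_induct)
  case base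
  show ?case unfolding pal_prefixes_are_pis_def
  proof (intro allI impI)
    fix l assume "l \<le> L 1"
    then have "l = L 1" by simp
    then show "\<exists>i. 1 \<le> i \<and> i \<le> 1 \<and> l = L i" by blast
  qed
next
  case (step n)
  show ?case unfolding pal_prefixes_are_pis_def
  proof (intro allI impI)
    fix l assume l: "l \<le> L (Suc n)" "pal_prefix W l"
    consider "l \<le> L n" | "l = L (Suc n)" | "L n < l" "l < L (Suc n)" using l(1) by linarith
    then show "\<exists>i. 1 \<le> i \<and> i \<le> Suc n \<and> l = L i"
    proof cases
      case 1
      obtain i where "1 \<le> i" "i \<le> n" "l = L i" by (rule pal_prefix_is_L[OF step.IH l(2) 1])
      then show ?thesis by (intro exI[of _ i]) simp
    next
      case 2
      then show ?thesis by auto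
    next
      case 3
      then show ?thesis using no_pal_prefix_after_L[OF step.IH step.hyps(1)] l(2) by blast
    qed
  qed
qed

lemma gap_le_period:
  assumes "\<forall>x. W (x + p) = W x" "0 < p" "1 \<le> i"
  shows "gap i \<le> p"
proof -
  have "prefix_period W (L (Suc i)) p" unfolding prefix_period_def using assms(1) by simp
  then show ?thesis
    using gap_le_prefix_period[OF pal_prefixes_are_pis[of "Suc i"] assms(3) order_refl _ assms(2)] by simp
qed

lemma eventually_pred_if_periodic:
  assumes "periodic_word W"
  shows "\<exists>N. \<forall>n\<ge>N. psi n = Inr (n - 1)"
proof (rule ccontr)
  assume not_eventually: "\<not> (\<exists>N. \<forall>n\<ge>N. psi n = Inr (n - 1))"
  obtain p where p: "0 < p" "\<forall>x. W (x + p) = W x" using assms unfolding periodic_word_def by blast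
  have "\<exists>i\<ge>1. c < gap i" for c
  proof (induction c)
    case 0
    then show ?case using gap_pos[of 1] by auto
  next
    case (Suc c)
    then obtain i where i: "1 \<le> i" "c < gap i" by blast
    have "\<not> (\<forall>n\<ge>Suc i. psi n = Inr (n - 1))" using not_eventually by blast
    then obtain n where n: "Suc i \<le> n" "psi n \<noteq> Inr (n - 1)" by auto
    then have "Suc (n - 1) \<in> tset psi" using psi_if_not_in_tset[of n] i by auto
    then have "gap (n - 1) < gap n" using gap_Suc_less[of "n - 1"] n i by simp
    moreover have "gap i \<le> gap (n - 1)" using gap_mono[of i "n - 1"] i n by simp
    ultimately show ?case using i n by (intro exI[of _ n]) auto
  qed
  then obtain i where "1 \<le> i" "p < gap i" by blast
  then show False using gap_le_period[OF p(2,1) \<open>1 \<le> i\<close>] by simp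
qed

end

theorem corollary4p13:
  fixes psi :: "nat \<Rightarrow> 'a + nat"
  assumes "is_function psi"
    and "reduced psi"
  shows "periodic_word (w_psi psi) \<longleftrightarrow> (\<exists>N. \<forall>n\<ge>N. psi n = Inr (n - 1))"
proof -
  interpret reduced_function psi using assms by unfold_locales
  show ?thesis using eventually_pred_if_periodic periodic_if_eventually_pred by blast
qed

end
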